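(* For $\alpha\in(0,\infty)$ and $p\in[0,\infty)$, as $n\to\infty$, $$\sum_{m=2}^{n-1}\frac{m^\alpha}{(n-m)(n-m+1)\log^p m}=\frac{n^\alpha}{\log^p n}\Big(1-\alpha\frac{\log n}{n}+\frac{\alpha\Psi(\alpha)+p}{n}+O\Big(\frac{1}{n\log n}\Big)\Big).$$
   Context: $\Psi$ denotes the digamma function (logarithmic derivative of the gamma function). *)

theory Defs
  imports "HOL-Analysis.Analysis" "HOL-Library.Landau_Symbols"
begin

end

theory Submission
  imports Defs "HOL-Real_Asymp.Real_Asymp"
begin

text \<open>
  Write \<open>w n m = m powr \<alpha> / ((n - m) * (n - m + 1))\<close> and split
  \<open>1 / ln m powr p = 1 / ln n powr p + (1 / ln m powr p - 1 / ln n powr p)\<close>.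

  For the unweighted sum, \<open>1 / ((n - m) * (n - m + 1)) = 1 / (n - m) - 1 / (n - m + 1)\<close> and
  summation by parts leave \<open>\<Sum>m. ((m + 1) powr \<alpha> - m powr \<alpha>) / (n - m)\<close>. The differences agree with
  \<open>\<alpha> K c\<^sub>m\<close> up to \<open>O(m powr (\<alpha> - 2))\<close>, where \<open>c\<^sub>m = pochhammer \<alpha> m / m!\<close> are the coefficients of
  \<open>(1 - x) powr -\<alpha>\<close> and \<open>K c\<^sub>m \<sim> m powr (\<alpha> - 1)\<close>. The convolution \<open>\<Sum>m<n. c\<^sub>m / (n - m)\<close> is exactly
  \<open>c\<^sub>n \<Sum>j<n. 1 / (\<alpha> + j) = c\<^sub>n (ln n - \<Psi>(\<alpha>) + O(1/n))\<close>, which produces the terms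
  \<open>- \<alpha> n powr (\<alpha> - 1) ln n + \<alpha> \<Psi>(\<alpha>) n powr (\<alpha> - 1)\<close>.

  For the correction, expanding \<open>t powr -p\<close> to first order around \<open>t = ln n\<close> (for \<open>m \<ge> sqrt n\<close>; the
  smaller \<open>m\<close> contribute only \<open>O(n powr (\<alpha>/2 - 1))\<close>) reduces it to
  \<open>p / ln n powr (p + 1) * \<Sum>m. w n m * ln (n / m)\<close>, and \<open>w n m * ln (n / m) \<approx> n powr (\<alpha> - 1) / (n - m + 1)\<close>
  sums to \<open>n powr (\<alpha> - 1) (ln n + O(1))\<close>.
\<close>

lemma exp_minus_one_le_mult_exp: fixes z :: real shows "exp z - 1 \<le> z * exp z"
proof -
  have "1 - z \<le> exp (-z)" using exp_ge_add_one_self[of "-z"] by linarith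
  hence "exp z * (1 - z) \<le> exp z * exp (-z)" by (intro mult_left_mono) auto
  thus ?thesis by (simp add: exp_minus field_simps)
qed

lemma exp_minus_one_minus_self_bounds:
  fixes z :: real assumes "z \<ge> 0"
  shows "0 \<le> exp z - 1 - z" "exp z - 1 - z \<le> z^2 * exp z"
proof -
  show "0 \<le> exp z - 1 - z" using exp_ge_add_one_self[of z] by linarith
  have "exp z - 1 - z \<le> z * (exp z - 1)" using exp_minus_one_le_mult_exp[of z] assms by (simp add: algebra_simps)
  also have "\<dots> \<le> z * (z * exp z)" using exp_minus_one_le_mult_exp[of z] assms by (intro mult_left_mono) auto
  finally show "exp z - 1 - z \<le> z^2 * exp z" by (simp add: power2_eq_square)
qed

lemma abs_exp_minus_one_le: fixes d :: real shows "\<bar>exp d - 1\<bar> \<le> \<bar>d\<bar> * exp \<bar>d\<bar>"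
proof (cases "d \<ge> 0")
  case True
  then show ?thesis using exp_minus_one_le_mult_exp[of d] by auto
next
  case False
  have "1 - exp d \<le> - d" using exp_ge_add_one_self[of d] by linarith
  moreover have "-d * 1 \<le> -d * exp (-d)" using False by (intro mult_left_mono) auto
  ultimately have "1 - exp d \<le> -d * exp (-d)" by linarith
  thus ?thesis using False by simp
qed

lemma ln_one_plus_bounds:
  fixes x :: real assumes "0 \<le> x"
  shows "0 \<le> x - ln (1 + x)" "x - ln (1 + x) \<le> x^2"
proof -
  show "0 \<le> x - ln (1 + x)" using ln_add_one_self_le_self[OF assms] by simp
  have "ln (1 + x) \<ge> 1 - 1 / (1 + x)"
    using ln_le_minus_one[of "1/(1+x)"] assms by (simp add: ln_div)
  moreover have "x - (1 - 1/(1+x)) = x^2/(1+x)" using assms by (simp add: field_simps power2_eq_square)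
  moreover have "x^2/(1+x) \<le> x^2" using assms by (simp add: divide_le_eq mult_le_cancel_left1)
  ultimately show "x - ln (1 + x) \<le> x^2" by linarith
qed

lemma ln_one_minus_bounds:
  fixes x :: real assumes "0 \<le> x" "x \<le> 1/2"
  shows "0 \<le> - ln (1 - x) - x" "- ln (1 - x) - x \<le> 2 * x^2"
proof -
  have "ln (1 - x) \<le> -x" using ln_le_minus_one[of "1 - x"] assms by simp
  thus "0 \<le> - ln (1 - x) - x" by simp
  have "\<bar>ln (1 + (-x)) - (-x)\<bar> \<le> 2 * (-x)^2" using assms by (intro abs_ln_one_plus_x_minus_x_bound) auto
  thus "- ln (1 - x) - x \<le> 2 * x^2" by simp
qed

lemma ln_le_powr_div:
  fixes y e :: real assumes "y > 0" "e > 0"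
  shows "ln y \<le> y powr e / e"
proof -
  have "ln (y powr e) \<le> y powr e - 1" using ln_le_minus_one[of "y powr e"] assms by simp
  hence "e * ln y \<le> y powr e" using assms by (simp add: ln_powr)
  thus ?thesis using assms by (simp add: field_simps)
qed

lemma powr_forward_difference_bound:
  fixes m a :: real assumes "m \<ge> 1" "a > 0"
  shows "\<bar>(m+1) powr a - m powr a - a * m powr (a-1)\<bar> \<le> (a + a^2 * exp a) * m powr (a-2)"
proof -
  define x where "x = 1/m"
  have x0: "0 < x" "x \<le> 1" using assms by (auto simp: x_def)
  define z where "z = a * ln (1 + x)"
  have z0: "0 \<le> z" using x0 assms by (simp add: z_def)
  have lnb: "0 \<le> x - ln (1+x)" "x - ln (1+x) \<le> x^2" using ln_one_plus_bounds[of x] x0 by auto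
  have "ln (1+x) \<le> 1" using lnb x0 by linarith
  hence "a * ln (1+x) \<le> a * 1" using assms by (intro mult_left_mono) auto
  hence zle: "z \<le> a" by (simp add: z_def)
  have e1: "0 \<le> exp z - 1 - z" "exp z - 1 - z \<le> z^2 * exp z" using exp_minus_one_minus_self_bounds[OF z0] by auto
  have "z^2 \<le> (a*x)^2" using z0 lnb assms unfolding z_def
    by (intro power_mono) (auto intro!: mult_left_mono)
  hence "z^2 * exp z \<le> (a*x)^2 * exp a" using zle
    by (intro mult_mono) auto
  with e1 have E1: "\<bar>exp z - 1 - z\<bar> \<le> a^2 * x^2 * exp a" by (simp add: power_mult_distrib)
  have "z - a*x = - (a * (x - ln (1+x)))" by (simp add: z_def algebra_simps)
  moreover have "a * (x - ln (1+x)) \<le> a * x^2" using lnb assms by (intro mult_left_mono) auto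
  moreover have "0 \<le> a * (x - ln (1+x))" using lnb assms by simp
  ultimately have E2: "\<bar>z - a*x\<bar> \<le> a * x^2" by simp
  have E: "\<bar>exp z - 1 - a * x\<bar> \<le> (a + a^2 * exp a) * x^2"
  proof -
    have "(a + a^2 * exp a) * x^2 = a^2 * x^2 * exp a + a * x^2" by (simp add: algebra_simps)
    thus ?thesis using E1 E2 by linarith
  qed
  have mp: "m + 1 = m * (1 + x)" using assms by (simp add: x_def field_simps)
  have "(m+1) powr a = m powr a * exp z"
  proof -
    have "ln (m+1) = ln m + ln (1+x)" unfolding mp using assms x0 by (simp add: ln_mult)
    thus ?thesis using assms x0 by (simp add: z_def powr_def distrib_left exp_add)
  qed
  moreover have "m powr (a-1) = m powr a * x" using assms by (simp add: x_def powr_diff)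
  moreover have "m powr (a-2) = m powr a * x^2" using assms
    by (simp add: x_def powr_diff power2_eq_square powr_add[symmetric])
  ultimately have eq: "(m+1) powr a - m powr a - a * m powr (a-1) = m powr a * (exp z - 1 - a * x)"
    by (simp add: algebra_simps)
  have "\<bar>m powr a * (exp z - 1 - a * x)\<bar> = m powr a * \<bar>exp z - 1 - a * x\<bar>"
    by (simp add: abs_mult)
  also have "\<dots> \<le> m powr a * ((a + a^2 * exp a) * x^2)" using E by (intro mult_left_mono) auto
  also have "\<dots> = (a + a^2 * exp a) * m powr (a-2)"
    using \<open>m powr (a-2) = m powr a * x^2\<close> by simp
  finally show ?thesis using eq by simp
qed

lemma one_minus_powr_bounds:
  fixes x a :: real assumes "0 \<le> x" "x \<le> 1/2" "a > 0"
  shows "0 \<le> 1 - (1-x) powr a" "1 - (1-x) powr a \<le> 2 * a * x"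
proof -
  have "(1-x) powr a \<le> 1 powr a" using assms by (intro powr_mono2) auto
  thus "0 \<le> 1 - (1-x) powr a" by simp
  have sq: "2*x^2 \<le> x" proof -
    have "x * (2*x) \<le> x * 1" using assms by (intro mult_left_mono) auto
    thus ?thesis by (simp add: power2_eq_square)
  qed
  have l: "ln (1-x) \<ge> -2*x" using ln_one_minus_bounds[OF assms(1,2)] sq by linarith
  have "(1-x) powr a = exp (a * ln (1-x))" using assms by (simp add: powr_def)
  also have "\<dots> \<ge> 1 + a * ln (1-x)" using exp_ge_add_one_self by blast
  finally have "(1-x) powr a \<ge> 1 + a * ln (1-x)" .
  moreover have "a * ln (1-x) \<ge> a * (-2*x)" using l assms by (intro mult_left_mono) auto
  ultimately show "1 - (1-x) powr a \<le> 2 * a * x" by linarith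
qed

lemma powr_neg_taylor_bound:
  fixes t p :: real assumes "0 \<le> t" "t \<le> 1/2" "p \<ge> 0"
  shows "\<bar>(1 - t) powr (- p) - 1 - p * t\<bar> \<le> (2*p + 4*p^2*exp p) * t^2"
proof -
  define u where "u = - ln (1-t)"
  have ub: "0 \<le> u - t" "u - t \<le> 2*t^2" using ln_one_minus_bounds[OF assms(1,2)] by (auto simp: u_def)
  have sq: "2*t^2 \<le> t" proof -
    have "t * (2*t) \<le> t * 1" using assms by (intro mult_left_mono) auto
    thus ?thesis by (simp add: power2_eq_square)
  qed
  have u2: "u \<le> 2*t" using ub sq by linarith
  have u0: "0 \<le> u" using ub assms by linarith
  have pu0: "0 \<le> p*u" using u0 assms by simp
  have "u \<le> 1" using u2 assms by linarith
  hence "p*u \<le> p*1" using assms by (intro mult_left_mono) auto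
  hence pule: "p*u \<le> p" by simp
  have e1: "0 \<le> exp (p*u) - 1 - p*u" "exp (p*u) - 1 - p*u \<le> (p*u)^2 * exp (p*u)"
    using exp_minus_one_minus_self_bounds[OF pu0] by auto
  have "(p*u)^2 \<le> (p*(2*t))^2" using u0 u2 assms by (intro power_mono mult_left_mono) auto
  hence "(p*u)^2 * exp (p*u) \<le> (p*(2*t))^2 * exp p" using pule by (intro mult_mono) auto
  moreover have "(p*(2*t))^2 * exp p = 4 * p^2 * exp p * t^2" by (simp add: power_mult_distrib)
  ultimately have E1: "\<bar>exp (p*u) - 1 - p*u\<bar> \<le> 4 * p^2 * exp p * t^2" using e1 by simp
  have "p * (u - t) \<le> p * (2*t^2)" using ub assms by (intro mult_left_mono) auto
  moreover have "0 \<le> p * (u - t)" using ub assms by simp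
  ultimately have E2: "\<bar>p*u - p*t\<bar> \<le> 2 * p * t^2" by (simp add: right_diff_distrib)
  have "(1-t) powr (-p) = exp (p*u)" using assms by (simp add: powr_def u_def)
  moreover have "(2*p + 4*p^2*exp p) * t^2 = 4 * p^2 * exp p * t^2 + 2 * p * t^2" by (simp add: algebra_simps)
  moreover have "\<bar>exp (p*u) - 1 - p*t\<bar> \<le> \<bar>exp (p*u) - 1 - p*u\<bar> + \<bar>p*u - p*t\<bar>"
    using abs_triangle_ineq[of "exp (p*u) - 1 - p*u" "p*u - p*t"] by simp
  ultimately show ?thesis using E1 E2 by simp
qed

lemma telescoping_convergence_rate:
  fixes x :: "nat \<Rightarrow> real"
  assumes step: "\<And>n. n \<ge> 1 \<Longrightarrow> \<bar>x (Suc n) - x n\<bar> \<le> C * (1/n - 1/(Suc n))"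
  shows "\<exists>l. x \<longlonglongrightarrow> l \<and> (\<forall>n\<ge>1. \<bar>x n - l\<bar> \<le> C / n)"
proof -
  have "0 \<le> C * (1/real 1 - 1/real (Suc 1))" using step[of 1] abs_ge_zero order_trans by blast
  hence C0: "C \<ge> 0" by simp
  have key: "\<bar>x (n+k) - x n\<bar> \<le> C * (1/n - 1/(n+k))" if n: "n \<ge> 1" for n k
  proof (induction k)
    case 0 then show ?case by simp
  next
    case (Suc k)
    have "\<bar>x (Suc (n+k)) - x (n+k)\<bar> \<le> C * (1/(n+k) - 1/(Suc (n+k)))" using step[of "n+k"] n by simp
    with Suc show ?case by (simp add: algebra_simps)
  qed
  have key2: "\<bar>x m - x n\<bar> \<le> C / n" if "n \<ge> 1" "m \<ge> n" for m n
  proof -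
    have "\<bar>x (n + (m-n)) - x n\<bar> \<le> C * (1/n - 1/(real n + real (m-n)))" using key that(1) by blast
    moreover have "C * (1/n - 1/(real n + real (m-n))) \<le> C * (1/n)" using C0 by (intro mult_left_mono) auto
    ultimately show ?thesis using that by simp
  qed
  have "Cauchy x"
  proof (rule CauchyI)
    fix e :: real assume e: "0 < e"
    obtain M :: nat where M: "M > 2 * C / e" using reals_Archimedean2 by blast
    define M' where "M' = Suc M"
    have M'1: "M' \<ge> 1" by (simp add: M'_def)
    have "2 * C / e < M'" using M by (simp add: M'_def)
    hence "2 * C < e * M'" using e by (simp add: field_simps)
    hence CM: "2 * (C / M') < e" using M'1 by (simp add: field_simps)
    show "\<exists>M. \<forall>m\<ge>M. \<forall>n\<ge>M. norm (x m - x n) < e"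
    proof (intro exI allI impI)
      fix m n assume "m \<ge> M'" "n \<ge> M'"
      hence "\<bar>x m - x M'\<bar> \<le> C / M'" "\<bar>x n - x M'\<bar> \<le> C / M'" using key2 M'1 by auto
      thus "norm (x m - x n) < e" using CM by simp
    qed
  qed
  then obtain l where l: "x \<longlonglongrightarrow> l" using Cauchy_convergent_iff convergent_def by blast
  have "\<bar>x n - l\<bar> \<le> C / n" if "n \<ge> 1" for n
  proof -
    have "(\<lambda>k. \<bar>x (k + n) - x n\<bar>) \<longlonglongrightarrow> \<bar>l - x n\<bar>"
      by (intro tendsto_intros LIMSEQ_ignore_initial_segment l)
    moreover have "\<forall>k\<ge>0. \<bar>x (k + n) - x n\<bar> \<le> C / n" using key2 that by simp
    ultimately have "\<bar>l - x n\<bar> \<le> C / n" by (intro LIMSEQ_le_const2) auto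
    thus ?thesis by simp
  qed
  with l show ?thesis by blast
qed

lemma inverse_square_le_telescoping: assumes "n \<ge> 1" shows "1 / (real n)^2 \<le> 2 * (1/n - 1/(Suc n))"
proof -
  have e: "1/n - 1/(Suc n) = 1/(real n*(n+1))" using assms by (simp add: field_simps)
  have "real n * (n+1) \<le> 2 * (real n * n)" using assms by (simp add: algebra_simps)
  hence "1/(2 * (real n * n)) \<le> 1/(real n*(n+1))" using assms by (intro frac_le) auto
  thus ?thesis unfolding e by (simp add: power2_eq_square)
qed

lemma Digamma_shifted_harmonic_bound:
  fixes a :: real assumes a: "a > 0" and "n \<ge> 1"
  shows "\<bar>(\<Sum>j<n. 1/(a + real j)) - ln (real n) + Digamma a\<bar> \<le> 2*(a+1) / n"
proof -
  define x where "x n = (\<Sum>j<n. 1/(a + real j)) - ln (real n)" for n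
  have st: "\<bar>x (Suc k) - x k\<bar> \<le> 2*(a+1) * (1/k - 1/(Suc k))" if k: "k \<ge> 1" for k
  proof -
    define y where "y = 1 / real k"
    have y0: "0 < y" using k by (simp add: y_def)
    have "ln (real (Suc k)) = ln (real k) + ln (1 + y)"
    proof -
      have "real (Suc k) = real k * (1 + y)" using k by (simp add: y_def field_simps)
      thus ?thesis using k y0 by (simp add: ln_mult)
    qed
    hence d: "x (Suc k) - x k = 1/(a + k) - ln (1 + y)" by (simp add: x_def)
    have lb: "0 \<le> y - ln (1+y)" "y - ln (1+y) \<le> y^2" using ln_one_plus_bounds[of y] y0 by auto
    have "1/(a+k) \<le> y" using k a by (simp add: y_def field_simps)
    moreover have "y - 1/(a+k) \<le> a * y^2"
    proof -
      have "y - 1/(a+k) = a / (real k * (a + k))" using k a by (simp add: y_def field_simps)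
      also have "\<dots> \<le> a / (real k * k)" using k a by (intro divide_left_mono mult_left_mono) auto
      finally show ?thesis by (simp add: y_def power2_eq_square)
    qed
    ultimately have "\<bar>x (Suc k) - x k\<bar> \<le> (a+1) * y^2" using d lb by (simp add: algebra_simps abs_le_iff)
    also have "\<dots> \<le> (a+1) * (2 * (1/k - 1/(Suc k)))" using inverse_square_le_telescoping[OF k] a
      by (intro mult_left_mono) (auto simp: y_def power_divide)
    also have "\<dots> = 2*(a+1) * (1/k - 1/(Suc k))" by (simp add: algebra_simps add_divide_distrib)
    finally show ?thesis .
  qed
  obtain l where l: "x \<longlonglongrightarrow> l" "\<forall>n\<ge>1. \<bar>x n - l\<bar> \<le> 2*(a+1) / n"
    using telescoping_convergence_rate[of x, OF st] by blast
  have "(\<lambda>m. of_real (ln (real m)) - (\<Sum>n<m. inverse (a + of_nat n))) \<longlonglongrightarrow> Digamma a"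
    using a by (intro Digamma_LIMSEQ) auto
  hence "(\<lambda>m. - x m) \<longlonglongrightarrow> Digamma a" by (simp add: x_def divide_inverse)
  moreover have "(\<lambda>m. - x m) \<longlonglongrightarrow> - l" using l(1) by (intro tendsto_intros)
  ultimately have "l = - Digamma a" using LIMSEQ_unique by fastforce
  thus ?thesis using l(2) \<open>n \<ge> 1\<close> by (simp add: x_def)
qed

section \<open>Coefficients of \<open>(1 - x) powr -a\<close>\<close>

text \<open>The coefficients of \<open>(1 - x) powr -a = (\<Sum>m. negbin_coeff a m * x ^ m)\<close>.\<close>
definition negbin_coeff :: "real \<Rightarrow> nat \<Rightarrow> real" where "negbin_coeff a m = pochhammer a m / fact m"

lemma negbin_coeff_0 [simp]: "negbin_coeff a 0 = 1" by (simp add: negbin_coeff_def)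
lemma negbin_coeff_Suc: "negbin_coeff a (Suc m) = negbin_coeff a m * (a + m) / (m + 1)"
  by (simp add: negbin_coeff_def pochhammer_Suc field_simps)
lemma negbin_coeff_pos: "a > 0 \<Longrightarrow> negbin_coeff a m > 0"
  by (induction m) (auto simp: negbin_coeff_Suc)

lemma negbin_coeff_convolution_step:
  fixes a :: real and n :: nat and S :: "nat \<Rightarrow> real"
  defines "S \<equiv> \<lambda>k. \<Sum>m<k. negbin_coeff a m / (real k - real m)"
  shows "(n+1) * S (Suc n) = (n + a) * S n + negbin_coeff a n"
proof -
  have "(n+1) * S (Suc n) = (\<Sum>m<Suc n. negbin_coeff a m * ((n+1) / (real (Suc n) - real m)))"
    by (simp add: S_def sum_distrib_left field_simps)
  also have "\<dots> = (\<Sum>m<Suc n. negbin_coeff a m + negbin_coeff a m * m / (real (Suc n) - real m))"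
  proof (intro sum.cong refl)
    fix m assume "m \<in> {..<Suc n}"
    hence "real (Suc n) - real m > 0" by simp
    thus "negbin_coeff a m * ((n+1) / (real (Suc n) - real m)) = negbin_coeff a m + negbin_coeff a m * m / (real (Suc n) - real m)"
      by (simp add: field_simps)
  qed
  also have "\<dots> = (\<Sum>m<Suc n. negbin_coeff a m) + (\<Sum>m<Suc n. negbin_coeff a m * m / (real (Suc n) - real m))"
    by (simp add: sum.distrib)
  also have "(\<Sum>m<Suc n. negbin_coeff a m * m / (real (Suc n) - real m)) = (\<Sum>j<n. (a + j) * negbin_coeff a j / (real n - real j))"
  proof -
    have "(\<Sum>m<Suc n. negbin_coeff a m * m / (real (Suc n) - real m)) = (\<Sum>j<n. negbin_coeff a (Suc j) * real (Suc j) / (real (Suc n) - real (Suc j)))"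
      by (subst sum.lessThan_Suc_shift) simp
    also have "\<dots> = (\<Sum>j<n. (a + j) * negbin_coeff a j / (real n - real j))"
    proof (intro sum.cong refl)
      fix j assume "j \<in> {..<n}"
      have "negbin_coeff a (Suc j) * real (Suc j) = (a + j) * negbin_coeff a j" by (simp add: negbin_coeff_Suc field_simps)
      moreover have "real (Suc n) - real (Suc j) = real n - real j" by simp
      ultimately show "negbin_coeff a (Suc j) * real (Suc j) / (real (Suc n) - real (Suc j)) = (a + j) * negbin_coeff a j / (real n - real j)" by simp
    qed
    finally show ?thesis .
  qed
  also have "\<dots> = (\<Sum>j<n. (n + a) * negbin_coeff a j / (real n - real j) - negbin_coeff a j)"
  proof (intro sum.cong refl)
    fix j assume "j \<in> {..<n}"
    hence "real n - real j > 0" by simp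
    thus "(a + j) * negbin_coeff a j / (real n - real j) = (n + a) * negbin_coeff a j / (real n - real j) - negbin_coeff a j"
      by (simp add: field_simps)
  qed
  also have "\<dots> = (n + a) * S n - (\<Sum>j<n. negbin_coeff a j)"
    by (simp add: S_def sum_subtractf sum_distrib_left)
  finally show ?thesis by simp
qed

text \<open>The left-hand side is the \<open>n\<close>-th coefficient of \<open>(1 - x) powr -a * (- ln (1 - x))\<close>,
  the derivative of \<open>(1 - x) powr -a\<close> with respect to \<open>a\<close>; the right-hand side is the derivative
  of \<open>negbin_coeff a n\<close> with respect to \<open>a\<close>.\<close>
lemma negbin_coeff_convolution:
  fixes a :: real assumes a: "a > 0"
  shows "(\<Sum>m<n. negbin_coeff a m / (real n - real m)) = negbin_coeff a n * (\<Sum>j<n. 1/(a + real j))"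
proof (induction n)
  case 0 then show ?case by simp
next
  case (Suc n)
  define H where "H = (\<Sum>j<n. 1/(a + real j))"
  have "(n+1) * (\<Sum>m<Suc n. negbin_coeff a m / (real (Suc n) - real m))
      = (n + a) * negbin_coeff a n * H + negbin_coeff a n"
    using negbin_coeff_convolution_step[of n a] Suc by (simp add: H_def)
  also have "\<dots> = negbin_coeff a n * (a+n) * (H + 1/(a+n))"
  proof -
    have "a + real n \<noteq> 0" using a by simp
    hence "negbin_coeff a n * (a+n) * (1/(a+n)) = negbin_coeff a n" by simp
    thus ?thesis by (simp add: distrib_left algebra_simps)
  qed
  also have "\<dots> = (n+1) * (negbin_coeff a (Suc n) * (\<Sum>j<Suc n. 1/(a + real j)))"
    by (simp add: negbin_coeff_Suc H_def)
  finally show ?case by simp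
qed

lemma ln_negbin_coeff_step:
  fixes a :: real assumes a: "a > 0" and m: "m \<ge> 1"
  defines "y \<equiv> \<lambda>m. ln (negbin_coeff a m) + (1 - a) * ln (real m)"
  shows "\<bar>y (Suc m) - y m\<bar> \<le> 2*(a+a^2) * (1/m - 1/(Suc m))"
proof -
  define v where "v = 1 / real m"
  have v0: "0 < v" using m by (simp add: v_def)
  have av: "0 < a * v" using v0 a by simp
  have "ln (negbin_coeff a (Suc m)) = ln (negbin_coeff a m) + ln (a + m) - ln (m+1)"
    using negbin_coeff_pos[OF a, of m] a by (simp add: negbin_coeff_Suc ln_div ln_mult)
  hence yd: "y (Suc m) - y m = ln (a + m) - ln (real m + 1) + (1-a) * (ln (real m + 1) - ln m)"
    by (simp add: y_def algebra_simps)
  have "a + real m = real m * (1 + a * v)" "real m + 1 = real m * (1 + v)"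
    using m by (simp_all add: v_def field_simps)
  hence "ln (a + m) = ln m + ln (1 + a * v)" "ln (real m + 1) = ln m + ln (1 + v)"
    using m av v0 by (simp_all add: ln_mult)
  hence d: "y (Suc m) - y m = ln (1 + a * v) - a * ln (1 + v)"
    unfolding yd by (simp add: algebra_simps)
  have l1: "0 \<le> a * v - ln (1 + a * v)" "a * v - ln (1 + a * v) \<le> (a * v)^2"
    using ln_one_plus_bounds[of "a * v"] av by auto
  have l2: "0 \<le> a * (v - ln (1 + v))" "a * (v - ln (1 + v)) \<le> a * v^2"
    using ln_one_plus_bounds[of v] v0 a by (auto intro: mult_left_mono)
  have "\<bar>y (Suc m) - y m\<bar> \<le> (a + a^2) * v^2" using l1 l2 unfolding d
    by (simp add: abs_le_iff algebra_simps power_mult_distrib)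
  also have "\<dots> \<le> (a + a^2) * (2 * (1/m - 1/(Suc m)))" using inverse_square_le_telescoping[OF m] a
    by (intro mult_left_mono) (auto simp: v_def power_divide)
  also have "\<dots> = 2*(a+a^2) * (1/m - 1/(Suc m))" by (simp add: algebra_simps add_divide_distrib)
  finally show ?thesis .
qed

text \<open>In fact \<open>K = \<Gamma>(a)\<close>, but only the existence of some \<open>K\<close> is needed.\<close>
lemma negbin_coeff_asymptotics:
  fixes a :: real assumes a: "a > 0"
  obtains K C where "C \<ge> 0"
    "\<And>m. m \<ge> 1 \<Longrightarrow> \<bar>K * negbin_coeff a m - real m powr (a-1)\<bar> \<le> C * real m powr (a-2)"
proof -
  define y where "y m = ln (negbin_coeff a m) + (1 - a) * ln (real m)" for m
  define C0 where "C0 = 2*(a+a^2)"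
  have C00: "C0 \<ge> 0" using a by (simp add: C0_def)
  have "\<bar>y (Suc m) - y m\<bar> \<le> C0 * (1/m - 1/(Suc m))" if "m \<ge> 1" for m
    using ln_negbin_coeff_step[OF a that] by (simp add: y_def C0_def)
  then obtain l where l: "\<forall>n\<ge>1. \<bar>y n - l\<bar> \<le> C0 / n"
    using telescoping_convergence_rate[of y C0] by blast
  have "\<bar>exp (-l) * negbin_coeff a m - real m powr (a-1)\<bar> \<le> C0 * exp C0 * real m powr (a-2)"
    if m: "m \<ge> 1" for m
  proof -
    define d where "d = y m - l"
    have dl: "\<bar>d\<bar> \<le> C0 / m" using l m by (simp add: d_def)
    also have "C0 / m \<le> C0 / 1" using C00 m by (intro divide_left_mono) auto
    finally have dl1: "\<bar>d\<bar> \<le> C0" by simp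
    have "exp (y m) = negbin_coeff a m * real m powr (1 - a)"
      using negbin_coeff_pos[OF a, of m] m by (simp add: y_def exp_add powr_def)
    hence "real m powr (a-1) * exp d
        = exp (-l) * negbin_coeff a m * (real m powr (1-a) * real m powr (a-1))"
      by (simp add: d_def exp_diff exp_minus field_simps)
    also have "real m powr (1-a) * real m powr (a-1) = 1" using m by (simp add: powr_add[symmetric])
    finally have "exp (-l) * negbin_coeff a m = real m powr (a-1) * exp d" by simp
    hence "exp (-l) * negbin_coeff a m - real m powr (a-1) = real m powr (a-1) * (exp d - 1)"
      by (simp add: algebra_simps)
    hence "\<bar>exp (-l) * negbin_coeff a m - real m powr (a-1)\<bar> = real m powr (a-1) * \<bar>exp d - 1\<bar>"
      by (simp add: abs_mult)
    also have "\<dots> \<le> real m powr (a-1) * (\<bar>d\<bar> * exp \<bar>d\<bar>)"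
      by (intro mult_left_mono abs_exp_minus_one_le) auto
    also have "\<dots> \<le> real m powr (a-1) * ((C0 / m) * exp C0)"
      using dl dl1 by (intro mult_left_mono mult_mono) auto
    also have "\<dots> = C0 * exp C0 * (real m powr (a-1) / m)" by simp
    also have "real m powr (a-1) / m = real m powr (a-2)"
      using m by (simp add: powr_diff power2_eq_square)
    finally show ?thesis .
  qed
  with C00 show thesis by (intro that[of "C0 * exp C0" "exp (-l)"]) auto
qed

section \<open>The sum without the logarithmic factor\<close>

lemma sum_by_parts_reciprocal_differences:
  fixes f :: "nat \<Rightarrow> real" and n b :: nat
  assumes "2 \<le> b"
  shows "b < n \<Longrightarrow> (\<Sum>m=2..b. f m * (1/(real n - m) - 1/(real n - m + 1))) =
           f b / (real n - b) - f 2 / (real n - 1) - (\<Sum>m=2..<b. (f (Suc m) - f m) / (real n - m))"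
  using assms
proof (induction b rule: nat_induct_at_least)
  case base
  then show ?case by (simp add: algebra_simps diff_divide_distrib)
next
  case (Suc b)
  hence IH: "(\<Sum>m=2..b. f m * (1/(real n - m) - 1/(real n - m + 1))) =
           f b / (real n - b) - f 2 / (real n - 1) - (\<Sum>m=2..<b. (f (Suc m) - f m) / (real n - m))" by simp
  have e: "real n - real (Suc b) + 1 = real n - b" by simp
  have L: "(\<Sum>m=2..Suc b. f m * (1/(real n - m) - 1/(real n - m + 1))) =
     (\<Sum>m=2..b. f m * (1/(real n - m) - 1/(real n - m + 1))) + f (Suc b) * (1/(real n - Suc b) - 1/(real n - Suc b + 1))"
    using Suc.hyps by simp
  have T: "f (Suc b) * (1/(real n - Suc b) - 1/(real n - Suc b + 1)) = f (Suc b) / (real n - Suc b) - f (Suc b) / (real n - b)"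
    unfolding e by (simp add: right_diff_distrib)
  have R: "(\<Sum>m=2..<Suc b. (f (Suc m) - f m) / (real n - m)) = (\<Sum>m=2..<b. (f (Suc m) - f m) / (real n - m)) + (f (Suc b) / (real n - b) - f b / (real n - b))"
    using Suc.hyps by (simp add: diff_divide_distrib)
  show ?case unfolding L R T IH by simp
qed

lemma sum_weight_by_parts:
  fixes f :: "nat \<Rightarrow> real" assumes n: "n \<ge> 3"
  shows "(\<Sum>m=2..n-1. f m / (real (n-m) * real (n-m+1)))
    = f (n-1) - f 2 / (real n - 1) - (\<Sum>m=2..<n-1. (f (Suc m) - f m) / (real n - m))"
proof -
  have "(\<Sum>m=2..n-1. f m / (real (n-m) * real (n-m+1)))
      = (\<Sum>m=2..n-1. f m * (1/(real n - m) - 1/(real n - m + 1)))"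
  proof (intro sum.cong refl)
    fix m assume m: "m \<in> {2..n-1}"
    hence "real (n-m) = real n - m" "real (n-m+1) = real n - m + 1" "real n - m \<ge> 1"
      using n by (auto simp: of_nat_diff)
    thus "f m / (real (n-m) * real (n-m+1)) = f m * (1/(real n - m) - 1/(real n - m + 1))"
      by (simp add: field_simps)
  qed
  also have "\<dots> = f (n-1) - f 2 / (real n - 1) - (\<Sum>m=2..<n-1. (f (Suc m) - f m) / (real n - m))"
    using sum_by_parts_reciprocal_differences[of "n-1" n f] n by (simp add: of_nat_diff)
  finally show ?thesis .
qed

lemma negbin_coeff_convolution_tail:
  fixes a :: real assumes a: "a > 0" and n: "n \<ge> 3"
  shows "(\<Sum>m=2..<n-1. negbin_coeff a m / (real n - m))
    = negbin_coeff a n * (\<Sum>j<n. 1/(a + real j)) - 1 / real n - a / (real n - 1) - negbin_coeff a (n-1)"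
proof -
  define g where "g m = negbin_coeff a m / (real n - real m)" for m
  have "negbin_coeff a n * (\<Sum>j<n. 1/(a + real j)) = (\<Sum>m<n. g m)"
    using negbin_coeff_convolution[OF a, of n] by (simp add: g_def)
  also have "(\<Sum>m<n. g m) = (\<Sum>m<n-1. g m) + g (n-1)"
    using sum.lessThan_Suc[of g "n-1"] n by simp
  also have "(\<Sum>m<n-1. g m) = (\<Sum>m\<in>{0..<2}. g m) + (\<Sum>m=2..<n-1. g m)"
    using sum.atLeastLessThan_concat[of 0 2 "n-1" g] n by (simp add: atLeast0LessThan)
  also have "(\<Sum>m\<in>{0..<2}. g m) = 1 / real n + a / (real n - 1)"
    by (simp add: numeral_2_eq_2 g_def negbin_coeff_Suc[of a 0, simplified])
  also have "g (n-1) = negbin_coeff a (n-1)" using n by (simp add: g_def of_nat_diff)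
  finally show ?thesis by (simp add: g_def)
qed

lemma powr_difference_negbin_approx:
  fixes a K C :: real assumes a: "a > 0" and m: "m \<ge> 1"
    and KC: "\<bar>K * negbin_coeff a m - real m powr (a-1)\<bar> \<le> C * real m powr (a-2)"
  shows "\<bar>real (Suc m) powr a - real m powr a - a * K * negbin_coeff a m\<bar>
    \<le> (a + a^2 * exp a + a * C) * real m powr (a-2)"
proof -
  have "\<bar>(real m + 1) powr a - real m powr a - a * real m powr (a-1)\<bar> \<le> (a + a^2 * exp a) * real m powr (a-2)"
    using powr_forward_difference_bound[of "real m" a] m a by simp
  moreover have "\<bar>a * (K * negbin_coeff a m - real m powr (a-1))\<bar> \<le> a * (C * real m powr (a-2))"
    using KC a by (simp add: abs_mult mult_left_mono)
  moreover have "real (Suc m) powr a - real m powr a - a * K * negbin_coeff a m =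
     ((real m + 1) powr a - real m powr a - a * real m powr (a-1)) - a * (K * negbin_coeff a m - real m powr (a-1))"
    by (simp add: algebra_simps)
  ultimately show ?thesis by (simp add: algebra_simps)
qed

lemma harm_le_one_plus_ln: "n \<ge> 1 \<Longrightarrow> harm n \<le> 1 + ln (real n)"
  using euler_mascheroni_sequence_decreasing[of 1 n] by (simp add: harm_def)

lemma powr_le_one_plus_powr:
  fixes m n a :: real assumes "1 \<le> m" "m \<le> n" "a > 0"
  shows "m powr (a - 1) \<le> 1 + n powr (a - 1)"
proof (cases "a \<le> 1")
  case True
  have "m powr (a-1) \<le> 1 powr (a-1)" using assms True by (intro powr_mono2') auto
  hence h: "m powr (a-1) \<le> 1" by simp
  have "0 \<le> n powr (a-1)" by simp
  with h show ?thesis by linarith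
next
  case False
  have "m powr (a-1) \<le> n powr (a-1)" using assms False by (intro powr_mono2) auto
  then show ?thesis by simp
qed

lemma powr_div_diff_le:
  fixes m n a :: real assumes "1 \<le> m" "m + 1 \<le> n" "a > 0"
  shows "m powr (a - 2) / (n - m) \<le> (4 * (1 + n powr (a-1)) / n) * (1/m + 1/(n - m))"
proof -
  define Q where "Q = 4 * (1 + n powr (a-1)) / n"
  have n0: "n > 0" using assms by simp
  have Q0: "Q \<ge> 0" using n0 by (simp add: Q_def)
  have mq: "m powr (a-2) = m powr (a-1) / m" using assms
    by (simp add: powr_diff power2_eq_square)
  show ?thesis
  proof (cases "2 * m \<ge> n")
    case True
    have "m powr (a-2) \<le> 4 * n powr (a-2)"
    proof (cases "a \<ge> 2")
      case True
      have "m powr (a-2) \<le> n powr (a-2)" using assms True by (intro powr_mono2) auto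
      thus ?thesis using powr_ge_zero[of n "a-2"] by linarith
    next
      case False
      have "m powr (a-2) \<le> (n/2) powr (a-2)" using assms False \<open>2*m \<ge> n\<close> by (intro powr_mono2') auto
      also have "\<dots> = n powr (a-2) / 2 powr (a-2)" using n0 by (simp add: powr_divide)
      also have "\<dots> \<le> n powr (a-2) / (1/4)"
      proof (intro divide_left_mono)
        have "2 powr (-2) \<le> 2 powr (a-2)" using assms by (intro powr_mono) auto
        moreover have "(2::real) powr (-2) = 1/4" by (simp add: powr_minus powr_numeral)
        ultimately show "1/4 \<le> 2 powr (a-2)" by simp
      qed auto
      finally show ?thesis by simp
    qed
    also have "4 * n powr (a-2) = 4 * n powr (a-1) / n" using n0
      by (simp add: powr_diff power2_eq_square)
    also have "\<dots> \<le> Q" unfolding Q_def using n0 by (intro divide_right_mono) auto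
    finally have "m powr (a-2) / (n-m) \<le> Q / (n-m)" using assms by (intro divide_right_mono) auto
    also have "\<dots> \<le> Q * (1/m + 1/(n-m))"
    proof -
      have "0 \<le> Q/m" "0 \<le> Q/(n-m)" using Q0 assms by auto
      thus ?thesis by (simp add: distrib_left)
    qed
    finally show ?thesis by (simp add: Q_def)
  next
    case False
    have "1/(n-m) \<le> 2/n" using False n0 assms by (simp add: field_simps)
    have "m powr (a-2) / (n-m) = (m powr (a-1) / m) * (1/(n-m))" by (simp add: mq)
    also have "\<dots> \<le> (m powr (a-1) / m) * (2/n)"
      using \<open>1/(n-m) \<le> 2/n\<close> assms by (intro mult_left_mono) auto
    also have "\<dots> \<le> ((1 + n powr (a-1)) / m) * (2/n)" using powr_le_one_plus_powr[of m n a] assms n0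
      by (intro mult_right_mono divide_right_mono) auto
    also have "\<dots> \<le> Q / m" using n0 assms by (simp add: Q_def field_simps)
    also have "\<dots> \<le> Q * (1/m + 1/(n-m))"
    proof -
      have "0 \<le> Q/m" "0 \<le> Q/(n-m)" using Q0 assms by auto
      thus ?thesis by (simp add: distrib_left)
    qed
    finally show ?thesis by (simp add: Q_def)
  qed
qed

lemma sum_powr_div_diff_le:
  fixes a :: real and n :: nat assumes "a > 0" "n \<ge> 2"
  shows "(\<Sum>m=1..<n. real m powr (a - 2) / (real n - m)) \<le> 8 * (1 + real n powr (a-1)) * (1 + ln (real n)) / n"
proof -
  define Q where "Q = 4 * (1 + real n powr (a-1)) / n"
  have Q0: "Q \<ge> 0" by (simp add: Q_def)
  have "(\<Sum>m=1..<n. real m powr (a - 2) / (real n - m)) \<le> (\<Sum>m=1..<n. Q * (1/m + 1/(real n - m)))"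
    using assms unfolding Q_def by (intro sum_mono powr_div_diff_le) auto
  also have "\<dots> = Q * ((\<Sum>m=1..<n. 1/real m) + (\<Sum>m=1..<n. 1/(real n - m)))"
    by (simp add: distrib_left sum.distrib sum_distrib_left)
  also have "(\<Sum>m=1..<n. 1/(real n - m)) = (\<Sum>m=1..<n. 1/real m)"
    by (subst sum.atLeastLessThan_rev) (intro sum.cong refl, auto simp: of_nat_diff)
  also have "(\<Sum>m=1..<n. 1/real m) = harm (n - 1)"
    using assms by (simp add: harm_def atLeastLessThanSuc_atLeastAtMost[symmetric] divide_inverse)
  finally have s1: "(\<Sum>m=1..<n. real m powr (a - 2) / (real n - m)) \<le> Q * (2 * harm (n-1))" by simp
  have "harm (n-1) \<le> (harm n :: real)" by (intro harm_mono) auto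
  also have "harm n \<le> 1 + ln (real n)" using harm_le_one_plus_ln assms by simp
  finally have "Q * (2 * harm (n-1)) \<le> Q * (2 * (1 + ln (real n)))" using Q0 by (intro mult_left_mono) auto
  with s1 have "(\<Sum>m=1..<n. real m powr (a - 2) / (real n - m)) \<le> Q * (2 * (1 + ln (real n)))" by linarith
  also have "Q * (2 * (1 + ln (real n))) = 8 * (1 + real n powr (a-1)) * (1 + ln (real n)) / n"
    unfolding Q_def by (simp add: field_simps)
  finally show ?thesis .
qed

lemma bigo_by_abs_bound:
  fixes f g h :: "nat \<Rightarrow> real"
  assumes "eventually (\<lambda>n. \<bar>f n\<bar> \<le> g n) at_top" "g \<in> O(h)"
  shows "f \<in> O(h)"
proof -
  have "eventually (\<lambda>n. norm (f n) \<le> 1 * norm (g n)) at_top"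
    using assms(1) by (auto elim!: eventually_mono)
  hence "f \<in> O(g)" by (rule bigoI)
  thus ?thesis using assms(2) by (rule landau_o.big_trans)
qed

lemma cmult_in_bigoI: fixes g h :: "nat \<Rightarrow> real" shows "g \<in> O(h) \<Longrightarrow> (\<lambda>x. c * g x) \<in> O(h)"
  by (cases "c = 0") auto

lemma negbin_coeff_shifted_harmonic_asymp:
  fixes a K C :: real assumes a: "a > 0" and C: "C \<ge> 0"
    and KC: "\<And>m. m \<ge> 1 \<Longrightarrow> \<bar>K * negbin_coeff a m - real m powr (a-1)\<bar> \<le> C * real m powr (a-2)"
  shows "(\<lambda>n. K * negbin_coeff a n * (\<Sum>j<n. 1/(a + real j)) - real n powr (a-1) * (ln (real n) - Digamma a))
    \<in> O(\<lambda>n. real n powr (a-1) / ln (real n))"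
proof -
  define H where "H n = (\<Sum>j<n. 1/(a + real j))" for n :: nat
  define Psi where "Psi = Digamma a"
  define M where "M = C * (\<bar>Psi\<bar> + 2*a + 3)"
  have bound: "eventually (\<lambda>n. \<bar>K * negbin_coeff a n * H n - real n powr (a-1) * (ln (real n) - Psi)\<bar>
      \<le> M * (real n powr (a-2) * (ln (real n) + 1)) + 2*(a+1) * (real n powr (a-1) / real n)) at_top"
    using eventually_ge_at_top[of "1::nat"]
  proof eventually_elim
    case (elim n)
    define u where "u = K * negbin_coeff a n - real n powr (a-1)"
    define v where "v = H n - ln (real n) + Psi"
    have ub: "\<bar>u\<bar> \<le> C * real n powr (a-2)" using KC[OF elim] by (simp add: u_def)
    have vb: "\<bar>v\<bar> \<le> 2*(a+1)/n"
      using Digamma_shifted_harmonic_bound[OF a elim] by (simp add: v_def H_def Psi_def)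
    have ln0: "ln (real n) \<ge> 0" using elim by simp
    have "2*(a+1)/n \<le> 2*(a+1)/1" using elim a by (intro divide_left_mono) auto
    hence "2*(a+1)/n \<le> 2*a+2" by simp
    hence "\<bar>H n\<bar> \<le> ln (real n) + \<bar>Psi\<bar> + 2*a + 2"
      using vb ln0 abs_ge_self[of Psi] abs_ge_minus_self[of Psi] unfolding v_def abs_le_iff by linarith
    hence "\<bar>u * H n\<bar> \<le> C * real n powr (a-2) * (ln (real n) + \<bar>Psi\<bar> + 2*a + 2)"
      unfolding abs_mult using ub C by (intro mult_mono) auto
    also have "\<dots> \<le> C * real n powr (a-2) * ((\<bar>Psi\<bar> + 2*a + 3) * (ln (real n) + 1))"
      using ln0 a C by (intro mult_left_mono) (auto simp: algebra_simps)
    finally have hu: "\<bar>u * H n\<bar> \<le> M * (real n powr (a-2) * (ln (real n) + 1))"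
      by (simp add: M_def mult_ac)
    have hv: "\<bar>real n powr (a-1) * v\<bar> \<le> 2*(a+1) * (real n powr (a-1) / real n)"
      using mult_left_mono[OF vb, of "real n powr (a-1)"] by (simp add: abs_mult mult.commute)
    have "K * negbin_coeff a n * H n - real n powr (a-1) * (ln (real n) - Psi) = u * H n + real n powr (a-1) * v"
      by (simp add: u_def v_def algebra_simps)
    thus ?case using hu hv abs_triangle_ineq[of "u * H n" "real n powr (a-1) * v"] by linarith
  qed
  have "(\<lambda>n. real n powr (a-2) * (ln (real n) + 1)) \<in> O(\<lambda>n. real n powr (a-1) / ln (real n))"
    "(\<lambda>n. real n powr (a-1) / real n) \<in> O(\<lambda>n. real n powr (a-1) / ln (real n))"
    by real_asymp+
  hence "(\<lambda>n. M * (real n powr (a-2) * (ln (real n) + 1)) + 2*(a+1) * (real n powr (a-1) / real n))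
      \<in> O(\<lambda>n. real n powr (a-1) / ln (real n))"
    by (intro sum_in_bigo cmult_in_bigoI)
  from bigo_by_abs_bound[OF bound this] show ?thesis unfolding H_def Psi_def .
qed

lemma sum_weight_powr_decomposition:
  fixes a K :: real and n :: nat and d :: "nat \<Rightarrow> real" assumes a: "a > 0" and n: "n \<ge> 3"
  defines "d \<equiv> \<lambda>m. real (Suc m) powr a - real m powr a - a * K * negbin_coeff a m"
  shows "(\<Sum>m=2..n-1. real m powr a / (real (n-m) * real (n-m+1)))
    = real n powr a - a * K * negbin_coeff a n * (\<Sum>j<n. 1/(a + real j))
      + (a * K * (1 / real n) + a * K * (a / (real n - 1)) - 2 powr a * (1 / (real n - 1)))
      - d (n-1) - (\<Sum>m=2..<n-1. d m / (real n - m))"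
proof -
  define c where "c = negbin_coeff a"
  define H where "H = (\<Sum>j<n. 1/(a + real j))"
  have "(\<Sum>m=2..n-1. real m powr a / (real (n-m) * real (n-m+1)))
      = real (n-1) powr a - 2 powr a / (real n - 1)
        - (\<Sum>m=2..<n-1. (real (Suc m) powr a - real m powr a) / (real n - m))"
    using sum_weight_by_parts[OF n, of "\<lambda>m. real m powr a"] by simp
  also have "(\<Sum>m=2..<n-1. (real (Suc m) powr a - real m powr a) / (real n - m))
      = a * K * (\<Sum>m=2..<n-1. c m / (real n - m)) + (\<Sum>m=2..<n-1. d m / (real n - m))"
    unfolding d_def c_def sum_distrib_left sum.distrib[symmetric]
    by (intro sum.cong refl) (simp add: diff_divide_distrib)
  also have "(\<Sum>m=2..<n-1. c m / (real n - m)) = c n * H - 1 / real n - a / (real n - 1) - c (n-1)"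
    using negbin_coeff_convolution_tail[OF a n] by (simp add: c_def H_def)
  also have "real (n-1) powr a = real n powr a - a * K * c (n-1) - d (n-1)"
    using n by (simp add: d_def c_def)
  finally show ?thesis unfolding c_def[symmetric] H_def[symmetric] by (simp add: algebra_simps)
qed

lemma sum_div_diff_bigo:
  fixes a D :: real and d :: "nat \<Rightarrow> real"
  assumes a: "a > 0" and d: "\<And>m. m \<ge> 1 \<Longrightarrow> \<bar>d m\<bar> \<le> D * real m powr (a-2)"
  shows "(\<lambda>n. \<Sum>m=2..<n-1. d m / (real n - m)) \<in> O(\<lambda>n. real n powr (a-1) / ln (real n))"
proof (rule bigo_by_abs_bound)
  have D0: "D \<ge> 0" using d[of 1] by simp
  show "eventually (\<lambda>n. \<bar>\<Sum>m=2..<n-1. d m / (real n - m)\<bar> \<le> 8 * D * ((1 + ln (real n)) / n)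
      + 8 * D * (real n powr (a-1) * (1 + ln (real n)) / n)) at_top"
    using eventually_ge_at_top[of "3::nat"]
  proof eventually_elim
    case (elim n)
    have "\<bar>\<Sum>m=2..<n-1. d m / (real n - m)\<bar> \<le> (\<Sum>m=2..<n-1. D * (real m powr (a-2) / (real n - m)))"
    proof (rule order_trans[OF sum_abs sum_mono])
      fix m assume m: "m \<in> {2..<n-1}"
      hence "real n - m > 0" by auto
      thus "\<bar>d m / (real n - m)\<bar> \<le> D * (real m powr (a-2) / (real n - m))"
        using d[of m] m by (simp add: divide_right_mono)
    qed
    also have "\<dots> \<le> D * (\<Sum>m=1..<n. real m powr (a-2) / (real n - m))"
      unfolding sum_distrib_left[symmetric] using D0 by (intro mult_left_mono sum_mono2) auto
    also have "\<dots> \<le> D * (8 * (1 + real n powr (a-1)) * (1 + ln (real n)) / n)"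
      using sum_powr_div_diff_le[OF a, of n] elim D0 by (intro mult_left_mono) auto
    also have "\<dots> = 8 * D * ((1 + ln (real n)) / n) + 8 * D * (real n powr (a-1) * (1 + ln (real n)) / n)"
      by (simp add: algebra_simps add_divide_distrib)
    finally show ?case .
  qed
  have "(\<lambda>n. (1 + ln (real n)) / n) \<in> O(\<lambda>n. real n powr (a-1) / ln (real n))"
    "(\<lambda>n. real n powr (a-1) * (1 + ln (real n)) / n) \<in> O(\<lambda>n. real n powr (a-1) / ln (real n))"
    using a by real_asymp+
  thus "(\<lambda>n. 8 * D * ((1 + ln (real n)) / n) + 8 * D * (real n powr (a-1) * (1 + ln (real n)) / n))
      \<in> O(\<lambda>n. real n powr (a-1) / ln (real n))"
    by (intro sum_in_bigo cmult_in_bigoI)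
qed

lemma sum_weight_asymp:
  fixes a :: real assumes a: "a > 0"
  shows "(\<lambda>n::nat. (\<Sum>m=2..n-1. real m powr a / (real (n-m) * real (n-m+1))) -
     (real n powr a - a * real n powr (a-1) * ln (real n) + a * Digamma a * real n powr (a-1)))
     \<in> O(\<lambda>n. real n powr (a-1) / ln (real n))"
proof -
  obtain K C where C: "C \<ge> 0"
    and KC: "\<And>m. m \<ge> 1 \<Longrightarrow> \<bar>K * negbin_coeff a m - real m powr (a-1)\<bar> \<le> C * real m powr (a-2)"
    using negbin_coeff_asymptotics[OF a] by metis
  define d where "d m = real (Suc m) powr a - real m powr a - a * K * negbin_coeff a m" for m
  define D where "D = a + a^2 * exp a + a * C"
  have d: "\<bar>d m\<bar> \<le> D * real m powr (a-2)" if "m \<ge> 1" for m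
    using powr_difference_negbin_approx[OF a that KC[OF that]] by (simp add: d_def D_def)
  define X where "X n = - a * (K * negbin_coeff a n * (\<Sum>j<n. 1/(a + real j))
      - real n powr (a-1) * (ln (real n) - Digamma a))
    + (a * K * (1 / real n) + a * K * (a / (real n - 1)) - 2 powr a * (1 / (real n - 1)))" for n
  have decomp: "eventually (\<lambda>n. (\<Sum>m=2..n-1. real m powr a / (real (n-m) * real (n-m+1))) -
     (real n powr a - a * real n powr (a-1) * ln (real n) + a * Digamma a * real n powr (a-1))
     = X n - d (n-1) - (\<Sum>m=2..<n-1. d m / (real n - m))) at_top"
    using eventually_ge_at_top[of "3::nat"]
  proof eventually_elim
    case (elim n)
    show ?case using sum_weight_powr_decomposition[OF a elim, of K]
      unfolding X_def d_def by (simp add: algebra_simps)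
  qed
  have "(\<lambda>n. 1 / real n) \<in> O(\<lambda>n. real n powr (a-1) / ln (real n))"
    "(\<lambda>n. a / (real n - 1)) \<in> O(\<lambda>n. real n powr (a-1) / ln (real n))"
    "(\<lambda>n. 1 / (real n - 1)) \<in> O(\<lambda>n. real n powr (a-1) / ln (real n))"
    using a by real_asymp+
  hence "(\<lambda>n. a * K * (1 / real n) + a * K * (a / (real n - 1)) - 2 powr a * (1 / (real n - 1)))
      \<in> O(\<lambda>n. real n powr (a-1) / ln (real n))"
    by (intro sum_in_bigo cmult_in_bigoI)
  hence "X \<in> O(\<lambda>n. real n powr (a-1) / ln (real n))"
    unfolding X_def by (intro sum_in_bigo(1) cmult_in_bigoI negbin_coeff_shifted_harmonic_asymp[OF a C KC])
  moreover have "(\<lambda>n. d (n-1)) \<in> O(\<lambda>n. real n powr (a-1) / ln (real n))"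
  proof (rule bigo_by_abs_bound)
    show "eventually (\<lambda>n. \<bar>d (n-1)\<bar> \<le> D * (real n - 1) powr (a-2)) at_top"
      using eventually_ge_at_top[of "2::nat"]
    proof eventually_elim
      case (elim n)
      thus ?case using d[of "n-1"] by (simp add: of_nat_diff)
    qed
    have "(\<lambda>n. (real n - 1) powr (a-2)) \<in> O(\<lambda>n. real n powr (a-1) / ln (real n))" by real_asymp
    thus "(\<lambda>n. D * (real n - 1) powr (a-2)) \<in> O(\<lambda>n. real n powr (a-1) / ln (real n))" by simp
  qed
  moreover note sum_div_diff_bigo[OF a d]
  ultimately have "(\<lambda>n. X n - d (n-1) - (\<Sum>m=2..<n-1. d m / (real n - m))) \<in> O(\<lambda>n. real n powr (a-1) / ln (real n))"
    by (intro sum_in_bigo)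
  thus ?thesis by (subst landau_o.big.in_cong[OF decomp])
qed

section \<open>The logarithmic correction\<close>

lemma weight_denominator_far:
  fixes m n :: real assumes "0 < m" "2 * m < n"
  shows "1 / ((n - m) * (n - m + 1)) \<le> 4 / n^2"
proof -
  have "(n/2) * (n/2) \<le> (n - m) * (n - m)" using assms by (intro mult_mono) auto
  also have "\<dots> \<le> (n - m) * (n - m + 1)" using assms by (intro mult_left_mono) auto
  finally have "n^2/4 \<le> (n - m) * (n - m + 1)" by (simp add: power2_eq_square)
  hence "1 / ((n - m) * (n - m + 1)) \<le> 1 / (n^2/4)" using assms by (intro divide_left_mono) auto
  thus ?thesis by simp
qed

lemma powr_mult_ratio_powr_half_le:
  fixes a m n :: real assumes "0 < m" "m \<le> n" "0 \<le> a"
  shows "m powr a * (n/m) powr (a/2) \<le> n powr a"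
proof -
  have "m powr a * (n/m) powr (a/2) = m powr (a/2) * n powr (a/2)"
    using assms by (simp add: powr_divide field_simps powr_add[symmetric])
  also have "\<dots> \<le> n powr (a/2) * n powr (a/2)" using assms by (intro mult_right_mono powr_mono2) auto
  also have "\<dots> = n powr a" by (simp add: powr_add[symmetric])
  finally show ?thesis .
qed

lemma weight_log_ratio_near:
  fixes a m n :: real assumes a: "a > 0" and m: "2 \<le> m" "m + 1 \<le> n" "n \<le> 2 * m"
  shows "\<bar>m powr a / ((n-m)*(n-m+1)) * ln (n/m) - n powr (a-1) / (n-m+1)\<bar> \<le> (2 + 2*a) * n powr (a-2)"
proof -
  define k where "k = n - m"
  have k1: "k \<ge> 1" and n0: "n > 0" using m by (auto simp: k_def)
  define x where "x = k / n"
  have x0: "0 < x" "x \<le> 1/2" using k1 m n0 by (auto simp: x_def k_def field_simps)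
  have mx: "m = n * (1 - x)" using n0 by (simp add: x_def k_def field_simps)
  define L where "L = - ln (1 - x)"
  have L: "ln (n/m) = L" using n0 x0 by (simp add: mx L_def ln_div ln_mult)
  have Lb: "0 \<le> L - x" "L - x \<le> 2*x^2" using ln_one_minus_bounds[of x] x0 by (auto simp: L_def)
  define q where "q = (1 - x) powr a"
  have qb: "0 \<le> 1 - q" "1 - q \<le> 2*a*x" using one_minus_powr_bounds[of x a] x0 a by (auto simp: q_def)
  have q0: "0 \<le> q" by (simp add: q_def)
  have "\<bar>q * L - x\<bar> \<le> 2*x^2 + 2*a*x^2"
  proof -
    have "q * L - x = q * (L - x) - x * (1 - q)" by (simp add: algebra_simps)
    moreover have "q * (L - x) \<le> 1 * (2*x^2)" using Lb qb q0 by (intro mult_mono) auto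
    moreover have "0 \<le> q * (L - x)" using Lb q0 by simp
    moreover have "x * (1 - q) \<le> 2*a*x^2"
      using mult_left_mono[OF qb(2), of x] x0 by (simp add: power2_eq_square mult_ac)
    moreover have "0 \<le> x * (1 - q)" "0 \<le> 2*a*x^2" using qb x0 a by simp_all
    ultimately show ?thesis unfolding abs_le_iff by simp
  qed
  have mpa: "m powr a = n powr a * q" using n0 x0 by (simp add: mx q_def powr_mult)
  have "m powr a / ((n-m)*(n-m+1)) * ln (n/m) - n powr (a-1) / (n-m+1)
      = n powr a * (q * L - x) / (k*(k+1))"
  proof -
    have "n powr a * (k / n) / (k * (k+1)) = (n powr a / n) * (k / (k * (k+1)))"
      by (simp add: divide_inverse mult_ac)
    also have "k / (k * (k+1)) = 1 / (k+1)" using k1 by simp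
    finally have "n powr a * (k / n) / (k * (k+1)) = n powr a / n / (k+1)" by simp
    moreover have "n powr a * (q * L - x) / (k*(k+1)) = n powr a * q / (k*(k+1)) * L - n powr a * (k / n) / (k * (k+1))"
      by (simp add: x_def right_diff_distrib diff_divide_distrib mult_ac)
    moreover have "n powr (a-1) = n powr a / n" using n0 by (simp add: powr_diff)
    ultimately show ?thesis unfolding mpa L by (simp add: k_def)
  qed
  hence "\<bar>m powr a / ((n-m)*(n-m+1)) * ln (n/m) - n powr (a-1) / (n-m+1)\<bar>
      = n powr a * \<bar>q * L - x\<bar> / (k*(k+1))"
    using k1 by (simp add: abs_mult)
  also have "\<dots> \<le> n powr a * (2*x^2 + 2*a*x^2) / (k*k)"
    using k1 \<open>\<bar>q * L - x\<bar> \<le> _\<close> by (intro frac_le mult_left_mono) auto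
  also have "2*x^2 + 2*a*x^2 = (2 + 2*a) * (k*k) / (n*n)"
    by (simp add: x_def power2_eq_square algebra_simps add_divide_distrib)
  also have "n powr a * ((2 + 2*a) * (k*k) / (n*n)) / (k*k) = (2 + 2*a) * (n powr a / (n*n))"
    using k1 by simp
  also have "n powr a / (n*n) = n powr (a-2)" using n0 by (simp add: powr_diff power2_eq_square)
  finally show ?thesis .
qed

lemma weight_log_ratio_far:
  fixes a m n :: real assumes a: "a > 0" and m: "2 \<le> m" "2 * m < n"
  shows "m powr a / ((n-m)*(n-m+1)) * ln (n/m) \<le> (8/a) * n powr (a-2)"
proof -
  have n0: "n > 0" "m > 0" using m by auto
  have "ln (n/m) \<le> (n/m) powr (a/2) / (a/2)" using ln_le_powr_div[of "n/m" "a/2"] n0 a by simp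
  hence "m powr a * ln (n/m) \<le> m powr a * ((n/m) powr (a/2) / (a/2))" by (intro mult_left_mono) auto
  also have "\<dots> = (2/a) * (m powr a * (n/m) powr (a/2))" by simp
  also have "\<dots> \<le> (2/a) * n powr a"
    using powr_mult_ratio_powr_half_le[of m n a] n0 m a by (intro mult_left_mono) auto
  finally have "m powr a * ln (n/m) \<le> (2/a) * n powr a" .
  hence "m powr a * ln (n/m) * (1 / ((n-m)*(n-m+1))) \<le> ((2/a) * n powr a) * (4 / n^2)"
    by (rule mult_mono[OF _ weight_denominator_far]) (use a m n0 in auto)
  also have "\<dots> = (8/a) * n powr (a-2)" using n0 by (simp add: powr_diff)
  finally show ?thesis by simp
qed

lemma weight_log_ratio_approx:
  fixes a m n :: real assumes a: "a > 0" and m: "2 \<le> m" "m + 1 \<le> n"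
  shows "\<bar>m powr a / ((n-m)*(n-m+1)) * ln (n/m) - n powr (a-1) / (n-m+1)\<bar> \<le> (2 + 2*a + 8/a) * n powr (a-2)"
proof (cases "n \<le> 2 * m")
  case True
  have "(2 + 2*a) * n powr (a-2) \<le> (2 + 2*a + 8/a) * n powr (a-2)" using a by (intro mult_right_mono) auto
  thus ?thesis using weight_log_ratio_near[OF a m True] by linarith
next
  case False
  define X where "X = n powr (a-2)"
  have n0: "n > 0" using m by simp
  have "0 \<le> m powr a / ((n-m)*(n-m+1)) * ln (n/m)" using m by simp
  moreover have "m powr a / ((n-m)*(n-m+1)) * ln (n/m) \<le> (8/a) * X"
    using weight_log_ratio_far[OF a m(1)] False by (simp add: X_def)
  moreover have "0 \<le> n powr (a-1) / (n-m+1)" using m by simp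
  moreover have "n powr (a-1) / (n-m+1) \<le> n powr (a-1) / (n/2)"
    using False m n0 by (intro divide_left_mono) auto
  moreover have "n powr (a-1) / (n/2) = 2 * X"
    using n0 by (simp add: X_def powr_diff power2_eq_square)
  moreover have "(2 + 2*a + 8/a) * X = 2 * X + 2 * (a * X) + (8/a) * X" by (simp add: algebra_simps)
  moreover have "0 \<le> a * X" "0 \<le> (8/a) * X" using a by (simp_all add: X_def)
  ultimately show ?thesis unfolding X_def[symmetric] abs_le_iff by linarith
qed

lemma weight_log_ratio_sq_le:
  fixes a m n :: real assumes a: "a > 0" and m: "2 \<le> m" "m + 1 \<le> n"
  shows "m powr a / ((n-m)*(n-m+1)) * ln (n/m)^2 \<le> (4 + 64/a^2) * n powr (a-2)"
proof (cases "n \<le> 2 * m")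
  case True
  define k where "k = n - m"
  have k1: "k \<ge> 1" and n0: "n > 0" using m by (auto simp: k_def)
  define x where "x = k / n"
  have x0: "0 < x" "x \<le> 1/2" using k1 True n0 by (auto simp: x_def k_def field_simps)
  have mx: "m = n * (1 - x)" using n0 by (simp add: x_def k_def field_simps)
  have "- ln (1 - x) - x \<le> 2*x^2" using ln_one_minus_bounds[of x] x0 by auto
  moreover have "2*x^2 \<le> x" using x0 mult_left_mono[of "2*x" 1 x] by (simp add: power2_eq_square)
  moreover have "ln (n/m) = - ln (1 - x)" using n0 x0 by (simp add: mx ln_div ln_mult)
  ultimately have "ln (n/m) \<le> 2*x" by linarith
  moreover have "0 \<le> ln (n/m)" using m n0 by simp
  ultimately have "ln (n/m)^2 \<le> (2*x)^2" by (intro power_mono) auto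
  moreover have "m powr a \<le> n powr a" using m a by (intro powr_mono2) auto
  ultimately have "m powr a * ln (n/m)^2 \<le> n powr a * (2*x)^2" by (intro mult_mono) auto
  hence "m powr a / ((n-m)*(n-m+1)) * ln (n/m)^2 \<le> n powr a * (2*x)^2 / (k*k)"
    using k1 by (simp add: k_def frac_le)
  also have "\<dots> = 4 * n powr (a-2)" using n0 k1 by (simp add: x_def powr_diff power2_eq_square)
  also have "\<dots> \<le> (4 + 64/a^2) * n powr (a-2)" by (intro mult_right_mono) auto
  finally show ?thesis .
next
  case False
  have n0: "n > 0" "m > 0" using m by auto
  have "ln (n/m) \<le> (n/m) powr (a/4) / (a/4)" using ln_le_powr_div[of "n/m" "a/4"] n0 a by simp
  hence "ln (n/m)^2 \<le> ((n/m) powr (a/4) / (a/4))^2" using m n0 by (intro power_mono) auto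
  also have "\<dots> = (16/a^2) * (n/m) powr (a/2)"
    using n0 by (simp add: power_divide power2_eq_square powr_add[symmetric] field_simps)
  finally have "m powr a * ln (n/m)^2 \<le> m powr a * ((16/a^2) * (n/m) powr (a/2))" by (intro mult_left_mono) auto
  also have "\<dots> = (16/a^2) * (m powr a * (n/m) powr (a/2))" by (simp only: mult_ac)
  also have "\<dots> \<le> (16/a^2) * n powr a"
    by (intro mult_left_mono powr_mult_ratio_powr_half_le) (use n0 False a in auto)
  finally have "m powr a * ln (n/m)^2 * (1 / ((n-m)*(n-m+1))) \<le> ((16/a^2) * n powr a) * (4 / n^2)"
    by (rule mult_mono[OF _ weight_denominator_far]) (use a m n0 False in auto)
  also have "\<dots> = (64/a^2) * n powr (a-2)" using n0 by (simp add: powr_diff)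
  also have "\<dots> \<le> (4 + 64/a^2) * n powr (a-2)" by (intro mult_right_mono) auto
  finally show ?thesis by simp
qed

lemma log_powr_taylor_remainder_le:
  fixes p m n W :: real assumes p: "p \<ge> 0" and m: "2 \<le> m" "m \<le> n" "n \<le> m*m" and W: "W \<ge> 0"
  shows "\<bar>W * (1 / ln m powr p - 1 / ln n powr p) - p / (ln n powr p * ln n) * (W * ln (n/m))\<bar>
     \<le> (2*p + 4*p^2*exp p) * (W * ln (n/m)^2) / (ln n powr p * ln n ^ 2)"
proof -
  define l where "l = ln n"
  define lm where "lm = ln m"
  have lm0: "lm > 0" using m by (simp add: lm_def)
  have llm: "lm \<le> l" using m by (simp add: lm_def l_def)
  have l0: "l > 0" using lm0 llm by simp
  have "ln n \<le> ln (m*m)" using m by simp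
  hence l2: "l \<le> 2 * lm" using m by (simp add: l_def lm_def ln_mult)
  define s where "s = (l - lm) / l"
  have s0: "0 \<le> s" "s \<le> 1/2" using llm l2 l0 by (auto simp: s_def field_simps)
  have lms: "lm = l * (1 - s)" using l0 by (simp add: s_def field_simps)
  have lnnm: "ln (n/m) = l * s" using m l0 by (simp add: ln_div s_def l_def lm_def)
  have e1: "1 / ln m powr p = l powr (-p) * (1 - s) powr (-p)"
  proof -
    have "1 / ln m powr p = lm powr (-p)" by (simp add: lm_def powr_minus divide_inverse)
    also have "\<dots> = l powr (-p) * (1 - s) powr (-p)" unfolding lms using l0 s0 by (simp add: powr_mult)
    finally show ?thesis .
  qed
  have e2: "1 / ln n powr p = l powr (-p)" by (simp add: l_def powr_minus divide_inverse)
  define R where "R = (1 - s) powr (- p) - 1 - p * s"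
  have Rb: "\<bar>R\<bar> \<le> (2*p + 4*p^2*exp p) * s^2" unfolding R_def using powr_neg_taylor_bound[OF s0 p] by simp
  have "W * (1 / ln m powr p - 1 / ln n powr p) - p / (ln n powr p * ln n) * (W * ln (n/m)) = W * l powr (-p) * R"
    unfolding e1 e2 lnnm using l0 by (simp add: R_def l_def[symmetric] powr_minus divide_inverse algebra_simps)
  hence "\<bar>W * (1 / ln m powr p - 1 / ln n powr p) - p / (ln n powr p * ln n) * (W * ln (n/m))\<bar> = W * l powr (-p) * \<bar>R\<bar>"
    using W by (simp add: abs_mult)
  also have "\<dots> \<le> W * l powr (-p) * ((2*p + 4*p^2*exp p) * s^2)" using Rb W by (intro mult_left_mono) auto
  also have "\<dots> = (2*p + 4*p^2*exp p) * (W * ln (n/m)^2) / (ln n powr p * ln n ^ 2)"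
  proof -
    have c: "(l^2 * s^2) / (l^2 * l powr p) = s^2 / l powr p"
      by (rule nonzero_mult_divide_mult_cancel_left) (use l0 in simp)
    have "(2*p + 4*p^2*exp p) * (W * ln (n/m)^2) / (ln n powr p * ln n ^ 2)
        = (2*p + 4*p^2*exp p) * W * ((l^2 * s^2) / (l^2 * l powr p))"
      unfolding lnnm l_def[symmetric] by (simp add: power_mult_distrib mult_ac)
    also have "\<dots> = W * l powr (-p) * ((2*p + 4*p^2*exp p) * s^2)"
      unfolding c by (simp add: powr_minus divide_inverse mult_ac)
    finally show ?thesis by simp
  qed
  finally show ?thesis .
qed

lemma log_powr_remainder_crude_le:
  fixes p m n W :: real assumes p: "p \<ge> 0" and m: "2 \<le> m" "m \<le> n" "3 \<le> n" and W: "W \<ge> 0"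
  shows "\<bar>W * (1 / ln m powr p - 1 / ln n powr p) - p / (ln n powr p * ln n) * (W * ln (n/m))\<bar>
     \<le> W * (1 / ln 2 powr p + p)"
proof -
  have l1: "ln n \<ge> 1" using ln3_gt_1 m by (smt (verit) ln_le_cancel_iff)
  have Pm: "ln 2 powr p \<le> ln m powr p" using m p by (intro powr_mono2) auto
  have Pmn: "ln m powr p \<le> ln n powr p" using m p by (intro powr_mono2) auto
  have P2: "ln 2 powr p > 0" by simp
  have Pm0: "ln m powr p > 0" using P2 Pm by linarith
  have Pn0: "ln n powr p > 0" using Pm0 Pmn by linarith
  have "1 / ln n powr p \<le> 1 / ln m powr p" using Pmn Pm0 Pn0 by (intro divide_left_mono) (auto intro: mult_pos_pos)
  hence d0: "0 \<le> 1 / ln m powr p - 1 / ln n powr p" by simp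
  have d1: "1 / ln m powr p - 1 / ln n powr p \<le> 1 / ln 2 powr p"
  proof -
    have "1 / ln m powr p \<le> 1 / ln 2 powr p" using Pm P2 Pm0 by (intro divide_left_mono) (auto intro: mult_pos_pos)
    moreover have "0 \<le> 1 / ln n powr p" by simp
    ultimately show ?thesis by linarith
  qed
  have Pn1: "1 \<le> ln n powr p" using l1 p by (metis powr_one_eq_one powr_mono2 zero_le_one)
  have lnm: "0 \<le> ln (n/m)" "ln (n/m) \<le> ln n" using m by (auto simp: ln_div)
  have q1: "0 \<le> p / (ln n powr p * ln n) * ln (n/m)" using lnm p l1 by simp
  have q2: "p / (ln n powr p * ln n) * ln (n/m) \<le> p"
  proof -
    have "p / (ln n powr p * ln n) * ln (n/m) \<le> p / (ln n powr p * ln n) * ln n"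
      using lnm p l1 by (intro mult_left_mono) auto
    also have "\<dots> = p / ln n powr p" using l1 by simp
    also have "\<dots> \<le> p / 1" using Pn1 p by (intro divide_left_mono) auto
    finally show ?thesis by simp
  qed
  have A1: "0 \<le> W * (1 / ln m powr p - 1 / ln n powr p)" "W * (1 / ln m powr p - 1 / ln n powr p) \<le> W * (1 / ln 2 powr p)"
    using d0 W mult_left_mono[OF d1 W] by auto
  have A2: "0 \<le> W * (p / (ln n powr p * ln n) * ln (n/m))" "W * (p / (ln n powr p * ln n) * ln (n/m)) \<le> W * p"
    using mult_nonneg_nonneg[OF W q1] mult_left_mono[OF q2 W] by auto
  have e: "p / (ln n powr p * ln n) * (W * ln (n/m)) = W * (p / (ln n powr p * ln n) * ln (n/m))" by simp
  define X where "X = W * (1 / ln m powr p - 1 / ln n powr p)"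
  define Y where "Y = W * (p / (ln n powr p * ln n) * ln (n/m))"
  have "\<bar>X - Y\<bar> \<le> W * (1 / ln 2 powr p) + W * p" using A1 A2 unfolding X_def[symmetric] Y_def[symmetric] abs_le_iff by linarith
  thus ?thesis unfolding e X_def Y_def by (simp add: distrib_left)
qed

lemma weight_small_index_le:
  fixes a m n :: real assumes a: "a > 0" and m: "2 \<le> m" "m * m < n" "4 \<le> n"
  shows "m powr a / ((n-m)*(n-m+1)) \<le> 4 * n powr (a/2 - 2)"
proof -
  have n0: "n > 0" "m > 0" using m by auto
  have mh: "m \<le> n/2"
  proof -
    have "2 * m \<le> m * m" using m by (intro mult_right_mono) auto
    thus ?thesis using m by linarith
  qed
  have "m powr a = (m*m) powr (a/2)" using n0 by (simp add: powr_mult powr_add[symmetric])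
  also have "\<dots> \<le> n powr (a/2)" using m a by (intro powr_mono2) auto
  finally have ma: "m powr a \<le> n powr (a/2)" .
  have "(n/2)*(n/2) \<le> (n-m)*(n-m+1)" using mh n0 by (intro mult_mono) auto
  hence den: "n^2/4 \<le> (n-m)*(n-m+1)" by (simp add: power2_eq_square)
  have "m powr a / ((n-m)*(n-m+1)) \<le> n powr (a/2) / (n^2/4)"
    using ma den n0 by (intro frac_le) auto
  also have "\<dots> = 4 * n powr (a/2 - 2)" using n0 by (simp add: powr_diff)
  finally show ?thesis .
qed

lemma sum_reciprocal_shift_eq_harm:
  assumes n: "n \<ge> (3::nat)"
  shows "(\<Sum>m=2..n-1. 1 / (real n - real m + 1)) = harm (n-1) - 1"
proof -
  have "(\<Sum>m=2..n-1. 1 / (real n - real m + 1)) = (\<Sum>i=2..n-1. 1 / (real n - real (n - 1 + 2 - i) + 1))"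
    by (rule sum.atLeastAtMost_rev)
  also have "\<dots> = (\<Sum>i=2..n-1. 1 / real i)"
  proof (intro sum.cong refl)
    fix i assume i: "i \<in> {2..n-1}"
    hence "real (n - 1 + 2 - i) = real n + 1 - real i" using n by (auto simp: of_nat_diff)
    thus "1 / (real n - real (n - 1 + 2 - i) + 1) = 1 / real i" by simp
  qed
  finally have h1: "(\<Sum>m=2..n-1. 1 / (real n - real m + 1)) = (\<Sum>i=2..n-1. 1 / real i)" .
  have "harm (n-1) = (\<Sum>k=1..n-1. inverse (real k))" by (simp add: harm_def)
  also have "\<dots> = inverse (real 1) + (\<Sum>k=2..n-1. inverse (real k))"
    using sum.atLeast_Suc_atMost[of 1 "n-1" "\<lambda>k. inverse (real k)"] n unfolding Suc_1 by simp
  finally have "harm (n-1) = 1 + (\<Sum>k=2..n-1. 1 / real k)"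
    by (simp add: divide_inverse)
  with h1 show ?thesis by simp
qed

text \<open>For \<open>m \<ge> sqrt n\<close> we have \<open>ln m \<ge> ln n / 2\<close>, so the Taylor bound applies; for smaller \<open>m\<close>
  the weight itself is \<open>O(n powr (a/2 - 2))\<close>.\<close>
lemma log_powr_remainder_le:
  fixes a p m n W :: real assumes a: "a > 0" and p: "p \<ge> 0" and mn: "2 \<le> m" "m + 1 \<le> n" "4 \<le> n"
  defines "W \<equiv> m powr a / ((n - m) * (n - m + 1))"
  shows "\<bar>W * (1 / ln m powr p - 1 / ln n powr p) - p / (ln n powr p * ln n) * (W * ln (n/m))\<bar>
    \<le> (2*p + 4*p^2*exp p) / (ln n powr p * ln n ^ 2) * (W * ln (n/m)^2) + (1 / ln 2 powr p + p) * (4 * n powr (a/2 - 2))"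
proof -
  have W0: "W \<ge> 0" using mn by (simp add: W_def)
  have t1: "0 \<le> (2*p + 4*p^2*exp p) / (ln n powr p * ln n ^ 2) * (W * ln (n/m)^2)"
    and t2: "0 \<le> (1 / ln 2 powr p + p) * (4 * n powr (a/2 - 2))"
    using W0 p mn by simp_all
  consider "n \<le> m * m" | "m * m < n" by linarith
  then show ?thesis
  proof cases
    case 1
    thus ?thesis using log_powr_taylor_remainder_le[OF p mn(1) _ 1 W0] mn t2
      by (simp add: mult_ac)
  next
    case 2
    have "\<bar>W * (1 / ln m powr p - 1 / ln n powr p) - p / (ln n powr p * ln n) * (W * ln (n/m))\<bar>
        \<le> W * (1 / ln 2 powr p + p)"
      using log_powr_remainder_crude_le[OF p mn(1) _ _ W0] mn by simp
    also have "\<dots> \<le> (1 / ln 2 powr p + p) * (4 * n powr (a/2 - 2))"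
      using weight_small_index_le[OF a mn(1) 2 mn(3)] p
      by (subst mult.commute, intro mult_right_mono) (auto simp: W_def)
    finally show ?thesis using t1 by linarith
  qed
qed

lemma sum_weight_log_ratio_asymp:
  fixes a :: real assumes a: "a > 0"
  shows "(\<lambda>n::nat. (\<Sum>m=2..n-1. real m powr a / ((real n - real m) * (real n - real m + 1)) * ln (real n / real m))
      - real n powr (a-1) * ln (real n)) \<in> O(\<lambda>n. real n powr (a-1))"
proof (rule bigo_by_abs_bound)
  define C where "C = 2 + 2*a + 8/a"
  have C0: "C \<ge> 0" using a by (simp add: C_def)
  show "eventually (\<lambda>n. \<bar>(\<Sum>m=2..n-1. real m powr a / ((real n - real m) * (real n - real m + 1)) * ln (real n / real m))
      - real n powr (a-1) * ln (real n)\<bar> \<le> (C + 1) * real n powr (a-1)) at_top"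
    using eventually_ge_at_top[of "3::nat"]
  proof eventually_elim
    case (elim n)
    define W where "W m = real m powr a / ((real n - real m) * (real n - real m + 1))" for m :: nat
    define R where "R = (\<Sum>m=2..n-1. W m * ln (real n / real m) - real n powr (a-1) / (real n - real m + 1))"
    have "\<bar>R\<bar> \<le> (\<Sum>m=2..n-1. C * real n powr (a-2))"
      unfolding R_def
    proof (rule order_trans[OF sum_abs sum_mono])
      fix m assume "m \<in> {2..n-1}"
      hence "2 \<le> real m" "real m + 1 \<le> real n" using elim by (auto simp flip: of_nat_Suc)
      thus "\<bar>W m * ln (real n / real m) - real n powr (a-1) / (real n - real m + 1)\<bar> \<le> C * real n powr (a-2)"
        using weight_log_ratio_approx[OF a] by (simp add: W_def C_def)
    qed
    also have "\<dots> = real (card {2..n-1}) * (C * real n powr (a-2))" by simp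
    also have "\<dots> \<le> real n * (C * real n powr (a-2))" using C0 by (intro mult_right_mono) auto
    also have "\<dots> = C * real n powr (a-1)" using elim by (simp add: powr_diff power2_eq_square)
    finally have R: "\<bar>R\<bar> \<le> C * real n powr (a-1)" .
    have "(\<Sum>m=2..n-1. real n powr (a-1) / (real n - real m + 1))
        = real n powr (a-1) * (\<Sum>m=2..n-1. 1 / (real n - real m + 1))"
      by (simp add: sum_distrib_left)
    also have "\<dots> = real n powr (a-1) * (harm (n-1) - 1)" using sum_reciprocal_shift_eq_harm[OF elim] by simp
    moreover have "(\<Sum>m=2..n-1. W m * ln (real n / real m))
        = R + (\<Sum>m=2..n-1. real n powr (a-1) / (real n - real m + 1))"
      by (simp add: R_def sum_subtractf)
    moreover have "real n powr (a-1) * (harm (n-1) - 1 - ln (real n))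
        = real n powr (a-1) * (harm (n-1) - 1) - real n powr (a-1) * ln (real n)"
      by (simp add: algebra_simps)
    ultimately have eq: "(\<Sum>m=2..n-1. W m * ln (real n / real m)) - real n powr (a-1) * ln (real n)
        = R + real n powr (a-1) * (harm (n-1) - 1 - ln (real n))"
      by linarith
    have "\<bar>harm (n-1) - 1 - ln (real n)\<bar> \<le> (1::real)"
    proof -
      have "ln (real n) \<le> harm (n-1)" using harm_ge_ln[of "n-1"] elim by (simp add: of_nat_diff)
      moreover have "harm (n-1) \<le> (harm n :: real)" by (intro harm_mono) auto
      moreover have "harm n \<le> 1 + ln (real n)" using harm_le_one_plus_ln elim by simp
      ultimately show ?thesis by (simp add: abs_le_iff)
    qed
    hence "\<bar>real n powr (a-1) * (harm (n-1) - 1 - ln (real n))\<bar> \<le> real n powr (a-1)"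
      using mult_left_mono[of _ 1 "real n powr (a-1)"] by (simp add: abs_mult)
    hence "\<bar>(\<Sum>m=2..n-1. W m * ln (real n / real m)) - real n powr (a-1) * ln (real n)\<bar>
        \<le> (C + 1) * real n powr (a-1)"
      unfolding eq using R by (simp add: algebra_simps abs_le_iff)
    thus ?case by (simp add: W_def algebra_simps)
  qed
  show "(\<lambda>n. (C + 1) * real n powr (a-1)) \<in> O(\<lambda>n. real n powr (a-1))" by (intro cmult_in_bigoI) simp
qed

lemma sum_weight_log_power_remainder:
  fixes a p :: real assumes a: "a > 0" and p: "p \<ge> 0"
  shows "(\<lambda>n::nat. \<Sum>m=2..n-1.
      real m powr a / ((real n - real m) * (real n - real m + 1)) * (1 / ln (real m) powr p - 1 / ln (real n) powr p)
      - p / (ln (real n) powr p * ln (real n)) * (real m powr a / ((real n - real m) * (real n - real m + 1)) * ln (real n / real m)))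
    \<in> O(\<lambda>n. real n powr (a-1) / (ln (real n) powr p * ln (real n)))"
proof (rule bigo_by_abs_bound)
  define C where "C = 4 + 64/a^2"
  define Kp where "Kp = 2*p + 4*p^2*exp p"
  define c0 where "c0 = 1 / ln 2 powr p"
  have const_nonneg: "C \<ge> 0" "Kp \<ge> 0" "c0 \<ge> 0" using a p by (auto simp: C_def Kp_def c0_def)
  define G where "G n = Kp * C * (real n powr (a-1) / (ln (real n) powr p * ln (real n) ^ 2))
    + 4 * (c0 + p) * real n powr (a/2 - 1)" for n :: nat
  show "eventually (\<lambda>n. \<bar>\<Sum>m=2..n-1.
      real m powr a / ((real n - real m) * (real n - real m + 1)) * (1 / ln (real m) powr p - 1 / ln (real n) powr p)
      - p / (ln (real n) powr p * ln (real n)) * (real m powr a / ((real n - real m) * (real n - real m + 1)) * ln (real n / real m))\<bar>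
      \<le> G n) at_top"
    using eventually_ge_at_top[of "4::nat"]
  proof eventually_elim
    case (elim n)
    define l where "l = ln (real n)"
    define P where "P = ln (real n) powr p"
    have P0: "P > 0" using elim by (simp add: P_def)
    define W where "W m = real m powr a / ((real n - real m) * (real n - real m + 1))" for m :: nat
    define B where "B = (c0 + p) * (4 * real n powr (a/2 - 2))"
    have B0: "B \<ge> 0" using const_nonneg p by (simp add: B_def)
    have "\<bar>W m * (1 / ln (real m) powr p - 1 / P) - p / (P * l) * (W m * ln (real n / real m))\<bar>
        \<le> Kp / (P * l^2) * (W m * ln (real n / real m)^2) + B" if m: "m \<in> {2..n-1}" for m
    proof -
      have "2 \<le> real m" "real m + 1 \<le> real n" "4 \<le> real n" using m elim by (auto simp flip: of_nat_Suc)
      from log_powr_remainder_le[OF a p this] show ?thesis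
        by (simp add: W_def P_def l_def Kp_def c0_def B_def)
    qed
    hence "\<bar>\<Sum>m=2..n-1. W m * (1 / ln (real m) powr p - 1 / P) - p / (P * l) * (W m * ln (real n / real m))\<bar>
        \<le> (\<Sum>m=2..n-1. Kp / (P * l^2) * (W m * ln (real n / real m)^2) + B)"
      by (intro order_trans[OF sum_abs sum_mono]) auto
    also have "\<dots> \<le> Kp / (P * l^2) * (real n * (C * real n powr (a-2))) + real n * B"
    proof -
      have "(\<Sum>m=2..n-1. W m * ln (real n / real m)^2) \<le> (\<Sum>m=2..n-1. C * real n powr (a-2))"
      proof (rule sum_mono)
        fix m assume "m \<in> {2..n-1}"
        hence "2 \<le> real m" "real m + 1 \<le> real n" using elim by (auto simp flip: of_nat_Suc)
        thus "W m * ln (real n / real m)^2 \<le> C * real n powr (a-2)"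
          using weight_log_ratio_sq_le[OF a] by (simp add: W_def C_def)
      qed
      also have "\<dots> = real (card {2..n-1}) * (C * real n powr (a-2))" by simp
      also have "\<dots> \<le> real n * (C * real n powr (a-2))" using const_nonneg by (intro mult_right_mono) auto
      finally have "Kp / (P * l^2) * (\<Sum>m=2..n-1. W m * ln (real n / real m)^2)
          \<le> Kp / (P * l^2) * (real n * (C * real n powr (a-2)))"
        using const_nonneg P0 by (intro mult_left_mono) auto
      moreover have "real (card {2..n-1}) * B \<le> real n * B" using B0 by (intro mult_right_mono) auto
      ultimately show ?thesis by (simp add: sum.distrib sum_distrib_left)
    qed
    also have "\<dots> = G n"
    proof -
      have "real n * real n powr (a-2) = real n powr (a-1)" "real n * real n powr (a/2 - 2) = real n powr (a/2 - 1)"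
        using elim by (simp_all add: powr_diff power2_eq_square)
      moreover have "Kp / (P * l^2) * (real n * (C * real n powr (a-2)))
          = Kp * C * ((real n * real n powr (a-2)) / (P * l^2))"
        by (simp add: mult_ac divide_inverse)
      moreover have "real n * B = 4 * (c0 + p) * (real n * real n powr (a/2 - 2))" by (simp add: B_def mult_ac)
      ultimately show ?thesis by (simp add: G_def P_def l_def)
    qed
    finally show ?case by (simp add: W_def P_def l_def)
  qed
  have "(\<lambda>n. real n powr (a-1) / (ln (real n) powr p * ln (real n) ^ 2))
      \<in> O(\<lambda>n. real n powr (a-1) / (ln (real n) powr p * ln (real n)))"
    "(\<lambda>n. real n powr (a/2 - 1)) \<in> O(\<lambda>n. real n powr (a-1) / (ln (real n) powr p * ln (real n)))"
    using a p by real_asymp+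
  thus "G \<in> O(\<lambda>n. real n powr (a-1) / (ln (real n) powr p * ln (real n)))"
    unfolding G_def by (intro sum_in_bigo cmult_in_bigoI)
qed

lemma sum_weight_log_correction_asymp:
  fixes a p :: real assumes a: "a > 0" and p: "p \<ge> 0"
  shows "(\<lambda>n::nat. (\<Sum>m=2..n-1. real m powr a / (real (n-m) * real (n-m+1)) * (1 / ln (real m) powr p - 1 / ln (real n) powr p))
            - p * real n powr (a-1) / ln (real n) powr p)
         \<in> O(\<lambda>n. real n powr (a-1) / (ln (real n) powr p * ln (real n)))"
proof -
  define q where "q n = p / (ln (real n) powr p * ln (real n))" for n :: nat
  define W where "W n m = real m powr a / ((real n - real m) * (real n - real m + 1))" for n m :: nat
  define S where "S n = (\<Sum>m=2..n-1. W n m * ln (real n / real m)) - real n powr (a-1) * ln (real n)" for n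
  define R where "R n = (\<Sum>m=2..n-1. W n m * (1 / ln (real m) powr p - 1 / ln (real n) powr p)
      - q n * (W n m * ln (real n / real m)))" for n
  have decomp: "eventually (\<lambda>n. (\<Sum>m=2..n-1. real m powr a / (real (n-m) * real (n-m+1)) * (1 / ln (real m) powr p - 1 / ln (real n) powr p))
      - p * real n powr (a-1) / ln (real n) powr p = q n * S n + R n) at_top"
    using eventually_ge_at_top[of "2::nat"]
  proof eventually_elim
    case (elim n)
    have "(\<Sum>m=2..n-1. real m powr a / (real (n-m) * real (n-m+1)) * (1 / ln (real m) powr p - 1 / ln (real n) powr p))
        = (\<Sum>m=2..n-1. W n m * (1 / ln (real m) powr p - 1 / ln (real n) powr p))"
      by (intro sum.cong refl) (auto simp: W_def of_nat_diff)
    moreover have "q n * S n = q n * (\<Sum>m=2..n-1. W n m * ln (real n / real m)) - p * real n powr (a-1) / ln (real n) powr p"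
      using elim by (simp add: S_def q_def right_diff_distrib)
    moreover have "R n = (\<Sum>m=2..n-1. W n m * (1 / ln (real m) powr p - 1 / ln (real n) powr p))
        - q n * (\<Sum>m=2..n-1. W n m * ln (real n / real m))"
      by (simp add: R_def sum_subtractf sum_distrib_left)
    ultimately show ?case by linarith
  qed
  moreover have "(\<lambda>n. q n * S n) \<in> O(\<lambda>n. real n powr (a-1) / (ln (real n) powr p * ln (real n)))"
  proof -
    have "(\<lambda>n. q n * S n) \<in> O(\<lambda>n. q n * real n powr (a-1))"
      using landau_o.big.mult_left[OF sum_weight_log_ratio_asymp[OF a]] by (simp add: S_def W_def)
    also have "(\<lambda>n. q n * real n powr (a-1)) = (\<lambda>n. p * (real n powr (a-1) / (ln (real n) powr p * ln (real n))))"
      by (simp add: q_def)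
    also have "\<dots> \<in> O(\<lambda>n. real n powr (a-1) / (ln (real n) powr p * ln (real n)))" by (intro cmult_in_bigoI) simp
    finally show ?thesis .
  qed
  moreover have "R \<in> O(\<lambda>n. real n powr (a-1) / (ln (real n) powr p * ln (real n)))"
    using sum_weight_log_power_remainder[OF a p] unfolding R_def W_def q_def .
  ultimately have "(\<lambda>n. q n * S n + R n) \<in> O(\<lambda>n. real n powr (a-1) / (ln (real n) powr p * ln (real n)))"
    by (intro sum_in_bigo) (simp_all only:)
  thus ?thesis by (subst landau_o.big.in_cong[OF decomp])
qed

lemma sum_weight_log_split:
  fixes a c p :: real and n :: nat assumes n: "n \<ge> 2"
  shows "(\<Sum>m=2..n-1. real m powr a / (real (n - m) * real (n - m + 1) * ln (real m) powr p))
      - real n powr a / ln (real n) powr p * (1 - a * ln (real n) / real n + (a * c + p) / real n)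
    = ((\<Sum>m=2..n-1. real m powr a / (real (n-m) * real (n-m+1)))
        - (real n powr a - a * real n powr (a-1) * ln (real n) + a * c * real n powr (a-1))) / ln (real n) powr p
      + ((\<Sum>m=2..n-1. real m powr a / (real (n-m) * real (n-m+1)) * (1 / ln (real m) powr p - 1 / ln (real n) powr p))
        - p * real n powr (a-1) / ln (real n) powr p)"
proof -
  define P where "P = ln (real n) powr p"
  have P0: "P > 0" using n by (simp add: P_def)
  have "(\<Sum>m=2..n-1. real m powr a / (real (n - m) * real (n - m + 1) * ln (real m) powr p))
      = (\<Sum>m=2..n-1. real m powr a / (real (n-m) * real (n-m+1))) / P
        + (\<Sum>m=2..n-1. real m powr a / (real (n-m) * real (n-m+1)) * (1 / ln (real m) powr p - 1 / P))"
    by (simp add: sum_divide_distrib sum.distrib[symmetric] right_diff_distrib)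
  moreover have "real n powr a / P * (1 - a * ln (real n) / real n + (a * c + p) / real n)
      = (real n powr a - a * real n powr (a-1) * ln (real n) + a * c * real n powr (a-1)) / P
        + p * real n powr (a-1) / P"
    using n P0 by (simp add: powr_diff field_simps)
  ultimately show ?thesis unfolding P_def[symmetric] by (simp add: diff_divide_distrib)
qed

theorem lemma6p6:
  fixes \<alpha> p :: real
  assumes "\<alpha> > 0" and "p \<ge> 0"
  shows "(\<lambda>n::nat. (\<Sum>m=2..n-1. real m powr \<alpha> /
            (real (n - m) * real (n - m + 1) * ln (real m) powr p))
          - real n powr \<alpha> / ln (real n) powr p *
            (1 - \<alpha> * ln (real n) / real n + (\<alpha> * Digamma \<alpha> + p) / real n))
        \<in> O(\<lambda>n::nat. real n powr \<alpha> / ln (real n) powr p * (1 / (real n * ln (real n))))"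
proof -
  have target: "real n powr (\<alpha>-1) / ln (real n) / ln (real n) powr p = real n powr \<alpha> / ln (real n) powr p * (1 / (real n * ln (real n)))"
    "real n powr (\<alpha>-1) / (ln (real n) powr p * ln (real n)) = real n powr \<alpha> / ln (real n) powr p * (1 / (real n * ln (real n)))"
    for n :: nat by (simp_all add: powr_diff)
  have "eventually (\<lambda>n::nat. ln (real n) powr p \<noteq> 0) at_top"
    using eventually_gt_at_top[of "1::nat"] by eventually_elim simp
  from landau_o.big.divide_right[OF this sum_weight_asymp[OF assms(1)]]
    sum_weight_log_correction_asymp[OF assms]
  have "(\<lambda>n. ((\<Sum>m=2..n-1. real m powr \<alpha> / (real (n-m) * real (n-m+1)))
        - (real n powr \<alpha> - \<alpha> * real n powr (\<alpha>-1) * ln (real n) + \<alpha> * Digamma \<alpha> * real n powr (\<alpha>-1))) / ln (real n) powr p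
      + ((\<Sum>m=2..n-1. real m powr \<alpha> / (real (n-m) * real (n-m+1)) * (1 / ln (real m) powr p - 1 / ln (real n) powr p))
        - p * real n powr (\<alpha>-1) / ln (real n) powr p))
    \<in> O(\<lambda>n. real n powr \<alpha> / ln (real n) powr p * (1 / (real n * ln (real n))))"
    unfolding target by (rule sum_in_bigo(1))
  moreover have "eventually (\<lambda>n::nat. n \<ge> 2) at_top" by (rule eventually_ge_at_top)
  ultimately show ?thesis
    by (subst landau_o.big.in_cong[OF eventually_mono[OF _ sum_weight_log_split]]) auto
qed

end
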